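(* Let $Q$ be a quantale, $S$ a sup-lattice, and $r:Q\to\mathcal{Q}(S)$ a representation of $Q$ on $S$; write $x\cdot a=r(a)(x)$ for $x\in S$, $a\in Q$. Then: (1) the representation is irreducible if and only if, for all $x\in S$, the condition $x\cdot 1_Q\le x$ implies $x=0_S$ or $x=1_S$; (2) if the representation is strong, then it is irreducible; (3) if $Q$ is unital and the representation is pre-unital, then it is irreducible if and only if it is strong.
   Context: A sup-lattice is a complete lattice; a sup-lattice homomorphism preserves arbitrary joins. A quantale is a sup-lattice $Q$ with an associative multiplication $\cdot$ distributing over arbitrary joins in each variable; $0$ and $1$ (or $1_Q$) denote its bottom and top. $Q$ is unital if it has an element $e$ with $e\cdot a=a=a\cdot e$ for all $a$. A quantale homomorphism is a join-preserving map preserving multiplication. For a sup-lattice $S$, $\mathcal{Q}(S)$ is the unital quantale of all sup-lattice endomorphisms of $S$, with pointwise joins, multiplication $f\cdot g=g\circ f$, and unit $\mathrm{id}_S$. A representation of $Q$ on $S$ is a quantale homomorphism $r:Q\to\mathcal{Q}(S)$. It is irreducible if the only principal ideals $I={\downarrow}x\subseteq S$ with $I\cdot Q\subseteq I$ are $\{0_S\}$ and $S$. It is strong if $r(1_Q)$ is the top of $\mathcal{Q}(S)$ (equivalently $x\cdot 1_Q=1_S$ for all $x\neq 0_S$). For unital $Q$, it is pre-unital if $\mathrm{id}_S\le r(e)$. *)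

theory Defs
  imports Main
begin

text \<open>Sup-lattices are complete lattices (type class complete_lattice).
  A sup-lattice homomorphism preserves arbitrary joins.\<close>
definition sup_hom :: "('a::complete_lattice \<Rightarrow> 'b::complete_lattice) \<Rightarrow> bool" where
  "sup_hom f \<longleftrightarrow> (\<forall>A. f (Sup A) = Sup (f ` A))"

definition quantale :: "('q::complete_lattice \<Rightarrow> 'q \<Rightarrow> 'q) \<Rightarrow> bool" where
  "quantale m \<longleftrightarrow>
     (\<forall>a b c. m (m a b) c = m a (m b c)) \<and>
     (\<forall>a A. m a (Sup A) = Sup (m a ` A)) \<and>
     (\<forall>a A. m (Sup A) a = Sup ((\<lambda>b. m b a) ` A))"

definition unit_of :: "('q \<Rightarrow> 'q \<Rightarrow> 'q) \<Rightarrow> 'q \<Rightarrow> bool" where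
  "unit_of m e \<longleftrightarrow> (\<forall>a. m e a = a \<and> m a e = a)"

text \<open>Representation r : Q \<rightarrow> Q(S).  Q(S) is the set of sup-lattice
  endomorphisms of S with pointwise joins and multiplication f\<cdot>g = g \<circ> f.
  We write x\<cdot>a = r a x.\<close>
definition representation ::
  "('q::complete_lattice \<Rightarrow> 'q \<Rightarrow> 'q) \<Rightarrow> ('q \<Rightarrow> 's::complete_lattice \<Rightarrow> 's) \<Rightarrow> bool" where
  "representation m r \<longleftrightarrow>
     (\<forall>a. sup_hom (r a)) \<and>
     (\<forall>A. r (Sup A) = Sup (r ` A)) \<and>
     (\<forall>a b. r (m a b) = r b \<circ> r a)"

definition irreducible_rep :: "('q \<Rightarrow> 's::complete_lattice \<Rightarrow> 's) \<Rightarrow> bool" where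
  "irreducible_rep r \<longleftrightarrow>
     (\<forall>x::'s. (\<forall>y a. y \<in> {z. z \<le> x} \<longrightarrow> r a y \<in> {z. z \<le> x})
        \<longrightarrow> {z. z \<le> x} = {bot} \<or> {z. z \<le> x} = UNIV)"

text \<open>Strong: r(1_Q) is the top element of Q(S).\<close>
definition strong_rep :: "('q::complete_lattice \<Rightarrow> 's::complete_lattice \<Rightarrow> 's) \<Rightarrow> bool" where
  "strong_rep r \<longleftrightarrow> sup_hom (r top) \<and> (\<forall>f::'s \<Rightarrow> 's. sup_hom f \<longrightarrow> f \<le> r top)"

definition pre_unital_rep :: "('q \<Rightarrow> 's::complete_lattice \<Rightarrow> 's) \<Rightarrow> 'q \<Rightarrow> bool" where
  "pre_unital_rep r e \<longleftrightarrow> id \<le> r e"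

end

theory Submission
  imports Defs
begin

text \<open>Writing \<open>x \<cdot> a\<close> for \<open>r a x\<close>: a principal ideal \<open>\<down>x\<close> is \<open>Q\<close>-stable iff \<open>x \<cdot> 1 \<le> x\<close>,
  since \<open>y \<cdot> a \<le> x \<cdot> 1\<close> for \<open>y \<le> x\<close> by monotonicity of \<open>r\<close> and of \<open>r 1\<close>.
  Strong representations satisfy \<open>x \<cdot> 1 = 1\<close> for \<open>x \<noteq> 0\<close>, so no stable \<open>x\<close> other than \<open>0, 1\<close>
  exists. Conversely \<open>x \<cdot> 1\<close> is always stable, as \<open>(x \<cdot> 1) \<cdot> 1 = x \<cdot> (1 \<cdot> 1) \<le> x \<cdot> 1\<close>; if
  also \<open>y \<le> y \<cdot> 1\<close> (pre-unitality gives \<open>y \<le> y \<cdot> e \<le> y \<cdot> 1\<close>), irreducibility forces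
  \<open>y \<cdot> 1 = 1\<close> for every \<open>y \<noteq> 0\<close>, which is strength.\<close>

lemma sup_hom_mono:
  assumes "sup_hom f" and "y \<le> x"
  shows "f y \<le> f x"
proof -
  have "f x = f (Sup {y, x})" using assms(2) by (simp add: sup_absorb2)
  also have "\<dots> = Sup (f ` {y, x})" using assms(1) unfolding sup_hom_def by (rule spec)
  also have "\<dots> = sup (f y) (f x)" by simp
  finally show ?thesis by (metis sup.cobounded1)
qed

lemma sup_hom_bot:
  assumes "sup_hom f"
  shows "f bot = bot"
  using assms unfolding sup_hom_def by (metis Sup_empty image_empty)

lemma sup_hom_bot_else_top:
  "sup_hom (\<lambda>y::'a::complete_lattice. if y = bot then bot else (top::'b::complete_lattice))"
  unfolding sup_hom_def
proof
  fix A :: "'a set"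
  show "(if Sup A = bot then bot else (top::'b)) = Sup ((\<lambda>y. if y = bot then bot else (top::'b)) ` A)"
  proof (cases "Sup A = bot")
    case True
    then have "\<forall>y\<in>A. (if y = bot then bot else top) = (bot::'b)" by (simp add: Sup_bot_conv)
    then have image_bot: "Sup ((\<lambda>y. if y = bot then bot else (top::'b)) ` A) = bot"
      by (simp only: SUP_bot_conv)
    show ?thesis unfolding if_P[OF True] using image_bot by (rule sym)
  next
    case False
    then obtain y where "y \<in> A" "y \<noteq> bot" by (auto simp: Sup_bot_conv)
    then have "(top::'b) \<in> (\<lambda>y. if y = bot then bot else top) ` A" by force
    then have image_top: "Sup ((\<lambda>y. if y = bot then bot else (top::'b)) ` A) = top"
      by (intro top_le Sup_upper)
    show ?thesis unfolding if_not_P[OF False] using image_top by (rule sym)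
  qed
qed

lemma representation_sup_hom:
  assumes "representation m r"
  shows "sup_hom (r a)"
  using assms unfolding representation_def by simp

lemma representation_mono:
  assumes "representation m r" and "a \<le> b"
  shows "r a y \<le> r b y"
proof -
  have "sup_hom r" using assms(1) unfolding representation_def sup_hom_def by simp
  then show ?thesis using sup_hom_mono assms(2) by (metis le_funD)
qed

lemma representation_top_top_le:
  assumes "representation m r"
  shows "r top (r top y) \<le> r top y"
proof -
  have "r top (r top y) = r (m top top) y" using assms unfolding representation_def by simp
  also have "\<dots> \<le> r top y" using assms by (rule representation_mono) simp
  finally show ?thesis .
qed

lemma down_stable_iff:
  assumes "representation m r"
  shows "(\<forall>y a. y \<le> x \<longrightarrow> r a y \<le> x) \<longleftrightarrow> r top x \<le> x"
proof
  assume top_stable: "r top x \<le> x"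
  show "\<forall>y a. y \<le> x \<longrightarrow> r a y \<le> x"
  proof (intro allI impI)
    fix y a assume "y \<le> x"
    have "r a y \<le> r top y" using assms by (rule representation_mono) simp
    also have "\<dots> \<le> r top x" using representation_sup_hom[OF assms] \<open>y \<le> x\<close> by (rule sup_hom_mono)
    finally show "r a y \<le> x" using top_stable by simp
  qed
qed simp

lemma irreducible_rep_iff:
  fixes r :: "'q::complete_lattice \<Rightarrow> 's::complete_lattice \<Rightarrow> 's"
  assumes "representation m r"
  shows "irreducible_rep r \<longleftrightarrow> (\<forall>x. r top x \<le> x \<longrightarrow> x = bot \<or> x = top)"
proof -
  have "{z. z \<le> x} = {bot} \<longleftrightarrow> x = bot" for x :: 's
    by (auto simp: bot_unique)
  moreover have "{z. z \<le> x} = UNIV \<longleftrightarrow> x = top" for x :: 's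
  proof
    assume "{z. z \<le> x} = UNIV"
    then show "x = top" by (metis UNIV_I mem_Collect_eq top_unique)
  qed simp
  ultimately show ?thesis
    unfolding irreducible_rep_def using down_stable_iff[OF assms] by simp
qed

lemma strong_rep_iff:
  fixes r :: "'q::complete_lattice \<Rightarrow> 's::complete_lattice \<Rightarrow> 's"
  shows "strong_rep r \<longleftrightarrow> sup_hom (r top) \<and> (\<forall>y. y \<noteq> bot \<longrightarrow> r top y = top)"
proof
  assume strong: "strong_rep r"
  have "sup_hom (\<lambda>y::'s. if y = bot then bot else (top::'s))" by (rule sup_hom_bot_else_top)
  with strong have "(\<lambda>y. if y = bot then bot else top) \<le> r top" unfolding strong_rep_def by blast
  then have "top \<le> r top y" if "y \<noteq> bot" for y using le_funD[of _ "r top" y] that by fastforce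
  then show "sup_hom (r top) \<and> (\<forall>y. y \<noteq> bot \<longrightarrow> r top y = top)"
    using strong unfolding strong_rep_def by (simp add: top_unique)
next
  assume hom_top: "sup_hom (r top) \<and> (\<forall>y. y \<noteq> bot \<longrightarrow> r top y = top)"
  have "f \<le> r top" if "sup_hom f" for f :: "'s \<Rightarrow> 's"
  proof (rule le_funI)
    fix y show "f y \<le> r top y"
      using sup_hom_bot[OF that] hom_top by (cases "y = bot") simp_all
  qed
  then show "strong_rep r" using hom_top unfolding strong_rep_def by blast
qed

lemma strong_imp_irreducible_rep:
  assumes rep: "representation m r" and strong: "strong_rep r"
  shows "irreducible_rep r"
  unfolding irreducible_rep_iff[OF rep]
proof (intro allI impI)
  fix x assume stable: "r top x \<le> x"
  show "x = bot \<or> x = top"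
  proof (cases "x = bot")
    case False
    then have "r top x = top" using strong unfolding strong_rep_iff by blast
    then show ?thesis using stable by (simp add: top_unique)
  qed simp
qed

lemma irreducible_imp_strong_rep:
  fixes r :: "'q::complete_lattice \<Rightarrow> 's::complete_lattice \<Rightarrow> 's"
  assumes rep: "representation m r" and irr: "irreducible_rep r"
    and inflationary: "\<And>y. y \<le> r top y"
  shows "strong_rep r"
  unfolding strong_rep_iff
proof (intro conjI allI impI)
  show "sup_hom (r top)" using rep by (rule representation_sup_hom)
next
  fix y :: 's assume "y \<noteq> bot"
  then have "r top y \<noteq> bot" using inflationary[of y] by (auto simp: bot_unique)
  then show "r top y = top"
    using irr representation_top_top_le[OF rep] unfolding irreducible_rep_iff[OF rep] by blast
qed

theorem proposition2p9:
  fixes m :: "'q::complete_lattice \<Rightarrow> 'q \<Rightarrow> 'q"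
    and r :: "'q \<Rightarrow> 's::complete_lattice \<Rightarrow> 's"
  assumes "quantale m" and "representation m r"
  shows "(irreducible_rep r \<longleftrightarrow> (\<forall>x::'s. r top x \<le> x \<longrightarrow> x = bot \<or> x = top))
    \<and> (strong_rep r \<longrightarrow> irreducible_rep r)
    \<and> (\<forall>e. unit_of m e \<longrightarrow> pre_unital_rep r e \<longrightarrow> (irreducible_rep r \<longleftrightarrow> strong_rep r))"
proof (intro conjI allI impI)
  show "irreducible_rep r \<longleftrightarrow> (\<forall>x::'s. r top x \<le> x \<longrightarrow> x = bot \<or> x = top)"
    using assms(2) by (rule irreducible_rep_iff)
  show "strong_rep r \<Longrightarrow> irreducible_rep r"
    using assms(2) by (rule strong_imp_irreducible_rep)
  fix e assume "pre_unital_rep r e"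
  then have "y \<le> r top y" for y
    using representation_mono[OF assms(2) top_greatest, of e y]
    unfolding pre_unital_rep_def by (metis id_apply le_funD order_trans)
  then show "irreducible_rep r \<longleftrightarrow> strong_rep r"
    using irreducible_imp_strong_rep strong_imp_irreducible_rep assms(2) by blast
qed

end
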